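(* Let $\mathcal{H}$ be a real Hilbert space, $A:\mathcal{H}\rightrightarrows\mathcal{H}$ maximal monotone, $p\geq2$ an integer, and define $\varphi:[0,+\infty)\times\mathcal{H}\to[0,+\infty)$ by $\varphi(\lambda,x)=\lambda^{1/(p-1)}\|x-(I+\lambda A)^{-1}x\|$ for $\lambda>0$ and $\varphi(0,x)=0$. Fix $x\in\mathcal{H}$ with $0\notin Ax$. Then $\lambda\mapsto\varphi(\lambda,x)$ is continuous and strictly increasing on $[0,+\infty)$, $\varphi(0,x)=0$, and $\varphi(\lambda,x)\to+\infty$ as $\lambda\to+\infty$.
   Context: $(I+\lambda A)^{-1}$ is the resolvent of $A$ of index $\lambda>0$. *)

theory Defs
  imports "HOL-Analysis.Analysis"
begin

definition monotone_op :: "('a::real_inner \<Rightarrow> 'a set) \<Rightarrow> bool" where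
  "monotone_op A \<longleftrightarrow> (\<forall>x y u v. u \<in> A x \<longrightarrow> v \<in> A y \<longrightarrow> inner (x - y) (u - v) \<ge> 0)"

definition maximal_monotone :: "('a::real_inner \<Rightarrow> 'a set) \<Rightarrow> bool" where
  "maximal_monotone A \<longleftrightarrow> monotone_op A \<and>
     (\<forall>B. monotone_op B \<and> (\<forall>x. A x \<subseteq> B x) \<longrightarrow> B = A)"

text \<open>Resolvent (I + \<lambda>A)^{-1} x: the point y with x \<in> y + \<lambda> A y,
  i.e. (x - y)/\<lambda> \<in> A y (single-valued for maximal monotone A and \<lambda> > 0).\<close>

definition resolvent :: "('a::real_inner \<Rightarrow> 'a set) \<Rightarrow> real \<Rightarrow> 'a \<Rightarrow> 'a" where
  "resolvent A l x = (THE y. (x - y) /\<^sub>R l \<in> A y)"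

definition phi :: "('a::real_inner \<Rightarrow> 'a set) \<Rightarrow> nat \<Rightarrow> real \<Rightarrow> 'a \<Rightarrow> real" where
  "phi A p l x = (if l > 0 then l powr (1 / (real p - 1)) * norm (x - resolvent A l x) else 0)"

end

theory Submission
  imports Defs "HOL-Real_Asymp.Real_Asymp"
begin

text \<open>Comparing the resolvent equations at two indices \<open>0 < l \<le> m\<close> through the monotonicity
  of \<open>A\<close> gives \<open>\<parallel>x - J\<^sub>l x\<parallel> \<le> \<parallel>x - J\<^sub>m x\<parallel>\<close> and
  \<open>\<parallel>J\<^sub>l x - J\<^sub>m x\<parallel> \<le> \<bar>1 - l/m\<bar> \<parallel>x - J\<^sub>m x\<parallel>\<close>, where \<open>J\<^sub>l = resolvent A l\<close>.
  Since \<open>0 \<notin> A x\<close>, the distance \<open>\<parallel>x - J\<^sub>l x\<parallel>\<close> is positive, so multiplying it by the strictly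
  increasing, unbounded factor \<open>l powr (1 / (p - 1))\<close> gives a continuous, strictly increasing,
  unbounded function vanishing at \<open>0\<close>.

  That \<open>J\<^sub>l x\<close> really solves \<open>(x - y) /\<^sub>R l \<in> A y\<close> is Minty's theorem. Its finite version (Debrunner--Flor)
  comes from maximising a concave function over a polytope; the general case follows because
  bounded closed convex sets in a Hilbert space have the finite intersection property, which is
  shown with minimal-norm points and the parallelogram law in place of weak compactness.\<close>

section \<open>Minimal-norm points and intersections of closed convex sets\<close>

lemma Cauchy_if_dist_le_null_sum:
  fixes X :: "nat \<Rightarrow> 'a::metric_space"
  assumes e: "e \<longlonglongrightarrow> 0" and dist: "\<And>m n. dist (X m) (X n) \<le> e m + e n"
  shows "Cauchy X"
proof (rule metric_CauchyI)
  fix r :: real assume "0 < r"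
  then obtain N where N: "\<And>n. N \<le> n \<Longrightarrow> \<bar>e n\<bar> < r / 2"
    using e unfolding LIMSEQ_iff by (metis half_gt_zero real_norm_def diff_zero)
  show "\<exists>M. \<forall>m\<ge>M. \<forall>n\<ge>M. dist (X m) (X n) < r"
  proof (intro exI allI impI)
    fix m n assume "N \<le> m" "N \<le> n"
    with N[of m] N[of n] dist[of m n] show "dist (X m) (X n) < r" by linarith
  qed
qed

lemma norm_diff_le_midpoint_bound:
  fixes x y :: "'a::real_inner"
  assumes "d \<le> norm (midpoint x y) ^ 2"
  shows "norm (x - y) ^ 2 \<le> 2 * (norm x ^ 2 - d) + 2 * (norm y ^ 2 - d)"
proof -
  have "norm (x - y) ^ 2 = 2 * norm x ^ 2 + 2 * norm y ^ 2 - 4 * norm (midpoint x y) ^ 2"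
    by (simp add: midpoint_def power2_norm_eq_inner inner_simps inner_commute field_simps)
  with assms show ?thesis by argo
qed

lemma convex_midpoint_mem: "convex K \<Longrightarrow> x \<in> K \<Longrightarrow> y \<in> K \<Longrightarrow> midpoint x y \<in> K"
  using midpoint_in_closed_segment closed_segment_subset by blast

lemma closed_convex_min_norm_exists:
  fixes K :: "'a::{real_inner,complete_space} set"
  assumes "closed K" and "convex K" and "K \<noteq> {}"
  shows "\<exists>m\<in>K. \<forall>z\<in>K. norm m \<le> norm z"
proof -
  define d where "d = (INF z\<in>K. norm z ^ 2)"
  have bdd: "bdd_below ((\<lambda>z. norm z ^ 2) ` K)" by (rule bdd_belowI2[of _ 0]) simp
  have d_le: "d \<le> norm z ^ 2" if "z \<in> K" for z
    unfolding d_def using bdd that by (rule cINF_lower)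
  define \<epsilon> where "\<epsilon> n = inverse (real (Suc n))" for n
  have "\<exists>z\<in>K. norm z ^ 2 < d + \<epsilon> n" for n
  proof -
    have "d < d + \<epsilon> n" by (simp add: \<epsilon>_def)
    then show ?thesis using cINF_less_iff[OF assms(3) bdd] unfolding d_def by blast
  qed
  then obtain X where X: "\<And>n. X n \<in> K" and X_lt: "\<And>n. norm (X n) ^ 2 < d + \<epsilon> n"
    by metis
  have \<epsilon>_lim: "\<epsilon> \<longlonglongrightarrow> 0" unfolding \<epsilon>_def by (rule LIMSEQ_inverse_real_of_nat)
  have \<epsilon>_pos: "0 \<le> \<epsilon> n" for n by (simp add: \<epsilon>_def)
  have "dist (X m) (X n) \<le> sqrt (2 * \<epsilon> m) + sqrt (2 * \<epsilon> n)" for m n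
  proof -
    have "d \<le> norm (midpoint (X m) (X n)) ^ 2"
      using d_le assms(2) X by (simp add: convex_midpoint_mem)
    then have "norm (X m - X n) ^ 2 \<le> 2 * \<epsilon> m + 2 * \<epsilon> n"
      using norm_diff_le_midpoint_bound X_lt[of m] X_lt[of n] by fastforce
    then have "dist (X m) (X n) \<le> sqrt (2 * \<epsilon> m + 2 * \<epsilon> n)"
      by (simp add: dist_norm real_le_rsqrt)
    also have "\<dots> \<le> sqrt (2 * \<epsilon> m) + sqrt (2 * \<epsilon> n)"
      using \<epsilon>_pos by (intro sqrt_add_le_add_sqrt) auto
    finally show ?thesis .
  qed
  moreover have "(\<lambda>n. sqrt (2 * \<epsilon> n)) \<longlonglongrightarrow> 0"
    using tendsto_real_sqrt[OF tendsto_mult_right_zero[OF \<epsilon>_lim, of 2]] by simp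
  ultimately have "Cauchy X" by (rule Cauchy_if_dist_le_null_sum[rotated])
  then obtain m where lim: "X \<longlonglongrightarrow> m" using Cauchy_convergent_iff convergent_def by blast
  have "m \<in> K" using closed_sequentially[OF assms(1) _ lim] X by blast
  have "(\<lambda>n. d + \<epsilon> n) \<longlonglongrightarrow> d + 0" by (intro tendsto_intros \<epsilon>_lim)
  moreover have "(\<lambda>n. norm (X n) ^ 2) \<longlonglongrightarrow> norm m ^ 2" by (intro tendsto_intros lim)
  ultimately have "norm m ^ 2 \<le> d + 0"
    by (rule tendsto_le[OF sequentially_bot]) (intro always_eventually allI less_imp_le X_lt)
  have "norm m \<le> norm z" if "z \<in> K" for z
  proof (rule power2_le_imp_le)
    show "norm m ^ 2 \<le> norm z ^ 2" using \<open>norm m ^ 2 \<le> d + 0\<close> d_le[OF that] by argo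
  qed simp
  with \<open>m \<in> K\<close> show ?thesis by blast
qed

definition min_norm_point :: "'a::real_normed_vector set \<Rightarrow> 'a" where
  "min_norm_point K = (SOME m. m \<in> K \<and> (\<forall>z\<in>K. norm m \<le> norm z))"

lemma
  fixes K :: "'a::{real_inner,complete_space} set"
  assumes "closed K" and "convex K" and "K \<noteq> {}"
  shows min_norm_point_mem: "min_norm_point K \<in> K"
    and min_norm_point_le: "z \<in> K \<Longrightarrow> norm (min_norm_point K) \<le> norm z"
  using someI_ex[OF closed_convex_min_norm_exists[OF assms, unfolded Bex_def]]
  unfolding min_norm_point_def by blast+

lemma norm_diff_min_norm_le:
  fixes K :: "'a::real_inner set"
  assumes "convex K" and "m \<in> K" and "\<forall>z\<in>K. norm m \<le> norm z" and "z \<in> K"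
  shows "norm (z - m) ^ 2 \<le> 2 * (norm z ^ 2 - norm m ^ 2)"
proof -
  have "norm m \<le> norm (midpoint z m)" using assms by (simp add: convex_midpoint_mem)
  then have "norm m ^ 2 \<le> norm (midpoint z m) ^ 2" by (simp add: power_mono)
  then show ?thesis using norm_diff_le_midpoint_bound by fastforce
qed

context
  fixes F :: "'a::{real_inner,complete_space} set set"
  assumes closed: "\<And>K. K \<in> F \<Longrightarrow> closed K"
    and convex: "\<And>K. K \<in> F \<Longrightarrow> convex K"
    and nonempty: "\<And>K. K \<in> F \<Longrightarrow> K \<noteq> {}"
    and directed: "\<And>K L. K \<in> F \<Longrightarrow> L \<in> F \<Longrightarrow> \<exists>M\<in>F. M \<subseteq> K \<inter> L"
    and bounded: "\<exists>K\<in>F. bounded K"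
begin

lemma min_norm_point_mem_family: "K \<in> F \<Longrightarrow> min_norm_point K \<in> K"
  using min_norm_point_mem closed convex nonempty by blast

lemma min_norm_point_antimono:
  assumes "K \<in> F" and "M \<in> F" and "M \<subseteq> K"
  shows "norm (min_norm_point K) \<le> norm (min_norm_point M)"
    and "norm (min_norm_point M - min_norm_point K) ^ 2
           \<le> 2 * (norm (min_norm_point M) ^ 2 - norm (min_norm_point K) ^ 2)"
proof -
  have K: "closed K" "convex K" "K \<noteq> {}" using assms(1) closed convex nonempty by auto
  have M: "closed M" "convex M" "M \<noteq> {}" using assms(2) closed convex nonempty by auto
  have "min_norm_point M \<in> K" using min_norm_point_mem[OF M] assms(3) by blast
  then show "norm (min_norm_point K) \<le> norm (min_norm_point M)"
    by (rule min_norm_point_le[OF K])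
  show "norm (min_norm_point M - min_norm_point K) ^ 2
          \<le> 2 * (norm (min_norm_point M) ^ 2 - norm (min_norm_point K) ^ 2)"
    using min_norm_point_le[OF K] \<open>min_norm_point M \<in> K\<close>
    by (intro norm_diff_min_norm_le[OF K(2) min_norm_point_mem[OF K]]) auto
qed

lemma bdd_above_min_norm_points: "bdd_above ((\<lambda>K. norm (min_norm_point K) ^ 2) ` F)"
proof -
  obtain K0 R where "K0 \<in> F" and R: "\<And>z. z \<in> K0 \<Longrightarrow> norm z \<le> R"
    using bounded by (meson bounded_iff)
  have "norm (min_norm_point K) ^ 2 \<le> R ^ 2" if K: "K \<in> F" for K
  proof -
    obtain M where M: "M \<in> F" "M \<subseteq> K \<inter> K0" using directed[OF K \<open>K0 \<in> F\<close>] by blast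
    then have "min_norm_point M \<in> K0" using min_norm_point_mem_family[OF M(1)] by blast
    moreover have "M \<subseteq> K" using M(2) by blast
    ultimately have "norm (min_norm_point K) \<le> R"
      using min_norm_point_antimono(1)[OF K M(1)] R order_trans by blast
    then show ?thesis by (rule power_mono[OF _ norm_ge_zero])
  qed
  then show ?thesis by (intro bdd_aboveI2)
qed

text \<open>The squared norms of the minimal-norm points grow as the sets shrink and are bounded by
  their supremum \<open>r\<close>. Pick sets whose minimal-norm point nearly attains \<open>r\<close>; by the parallelogram
  law the minimal-norm point of any smaller set of the family is then close to theirs.\<close>

lemma min_norm_points_approx:
  "\<exists>Kn e. (\<forall>n. Kn n \<in> F) \<and> e \<longlonglongrightarrow> 0 \<and>
     (\<forall>n. \<forall>M\<in>F. M \<subseteq> Kn n \<longrightarrow> norm (min_norm_point M - min_norm_point (Kn n)) \<le> e n)"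
proof -
  define r where "r = (SUP K\<in>F. norm (min_norm_point K) ^ 2)"
  have r_ge: "norm (min_norm_point K) ^ 2 \<le> r" if "K \<in> F" for K
    unfolding r_def using that bdd_above_min_norm_points by (rule cSUP_upper)
  define \<epsilon> where "\<epsilon> n = inverse (real (Suc n))" for n
  have "\<exists>K\<in>F. r - \<epsilon> n < norm (min_norm_point K) ^ 2" for n
  proof -
    have "F \<noteq> {}" using bounded by blast
    moreover have "r - \<epsilon> n < r" by (simp add: \<epsilon>_def)
    ultimately show ?thesis
      using less_cSUP_iff[OF \<open>F \<noteq> {}\<close> bdd_above_min_norm_points] unfolding r_def by blast
  qed
  then obtain Kn where Kn: "\<And>n. Kn n \<in> F"
    and Kn_gt: "\<And>n. r - \<epsilon> n < norm (min_norm_point (Kn n)) ^ 2"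
    by metis
  have "(\<lambda>n. sqrt (2 * \<epsilon> n)) \<longlonglongrightarrow> 0"
    using tendsto_real_sqrt[OF tendsto_mult_right_zero[OF LIMSEQ_inverse_real_of_nat, of 2]]
    by (simp add: \<epsilon>_def)
  moreover have "norm (min_norm_point M - min_norm_point (Kn n)) \<le> sqrt (2 * \<epsilon> n)"
    if M: "M \<in> F" "M \<subseteq> Kn n" for n M
  proof -
    have "norm (min_norm_point M - min_norm_point (Kn n)) ^ 2 \<le> 2 * \<epsilon> n"
      using min_norm_point_antimono(2)[OF Kn M] r_ge[OF M(1)] Kn_gt[of n] by argo
    then show ?thesis by (rule real_le_rsqrt)
  qed
  ultimately show ?thesis using Kn by blast
qed

lemma directed_closed_convex_Inter_nonempty: "\<Inter>F \<noteq> {}"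
proof -
  obtain Kn e where Kn_all: "\<forall>n. Kn n \<in> F" and e: "e \<longlonglongrightarrow> 0"
    and approx_all: "\<forall>n. \<forall>M\<in>F. M \<subseteq> Kn n \<longrightarrow> norm (min_norm_point M - min_norm_point (Kn n)) \<le> e n"
    using min_norm_points_approx by blast
  note Kn = Kn_all[rule_format] and approx = approx_all[rule_format]
  have common_refinement: "\<exists>M\<in>F. M \<subseteq> K \<and> M \<subseteq> Kn n" if "K \<in> F" for K n
    using directed[OF that Kn[of n]] by blast
  define X where "X n = min_norm_point (Kn n)" for n
  have "dist (X m) (X n) \<le> e m + e n" for m n
  proof -
    obtain M where "M \<in> F" "M \<subseteq> Kn m" "M \<subseteq> Kn n" using common_refinement[OF Kn] by blast
    have "dist (X m) (X n) \<le> dist (min_norm_point M) (X m) + dist (min_norm_point M) (X n)"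
      by (rule dist_triangle3)
    also have "\<dots> \<le> e m + e n"
      unfolding dist_norm X_def by (intro add_mono approx) fact+
    finally show ?thesis .
  qed
  then have "Cauchy X" by (rule Cauchy_if_dist_le_null_sum[OF e])
  then obtain x where x: "X \<longlonglongrightarrow> x" using Cauchy_convergent_iff convergent_def by blast
  have "x \<in> K" if "K \<in> F" for K
  proof -
    have "\<forall>n. \<exists>M. M \<in> F \<and> M \<subseteq> K \<and> M \<subseteq> Kn n" using common_refinement[OF that] by blast
    from choice[OF this] obtain M where "\<forall>n. M n \<in> F \<and> M n \<subseteq> K \<and> M n \<subseteq> Kn n"
      by blast
    then have M: "M n \<in> F" "M n \<subseteq> K" "M n \<subseteq> Kn n" for n by simp_all
    have "(\<lambda>n. min_norm_point (M n) - X n) \<longlonglongrightarrow> 0"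
      using approx[OF M(1) M(3)] by (intro Lim_null_comparison[OF _ e]) (simp add: X_def)
    from tendsto_add[OF this x] have "(\<lambda>n. min_norm_point (M n)) \<longlonglongrightarrow> x"
      by simp
    moreover have "min_norm_point (M n) \<in> K" for n
      using M(2) min_norm_point_mem_family[OF M(1)] by blast
    ultimately show ?thesis
      using closed_sequentially[OF closed[OF that], of "\<lambda>n. min_norm_point (M n)"] by blast
  qed
  then show ?thesis by blast
qed

end

section \<open>Minty's theorem\<close>

definition monotone_set :: "('a::real_inner \<times> 'a) set \<Rightarrow> bool" where
  "monotone_set G \<longleftrightarrow> (\<forall>p\<in>G. \<forall>q\<in>G. 0 \<le> inner (fst p - fst q) (snd p - snd q))"

lemma monotone_set_inner_convex_combination_le:
  fixes S :: "('a::real_inner \<times> 'a) set" and w :: "'a \<times> 'a \<Rightarrow> real"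
  assumes "finite S" and mono: "monotone_set S"
    and w_nonneg: "\<forall>p\<in>S. 0 \<le> w p" and w_sum: "sum w S = 1"
  shows "inner (\<Sum>p\<in>S. w p *\<^sub>R fst p) (\<Sum>p\<in>S. w p *\<^sub>R snd p) \<le> (\<Sum>p\<in>S. w p * inner (fst p) (snd p))"
proof -
  let ?A = "\<Sum>p\<in>S. w p *\<^sub>R fst p" and ?B = "\<Sum>p\<in>S. w p *\<^sub>R snd p"
    and ?E = "\<Sum>p\<in>S. w p * inner (fst p) (snd p)"
  have diag: "(\<Sum>p\<in>S. \<Sum>q\<in>S. w p * w q * inner (fst p) (snd p)) = ?E"
    by (simp add: sum_distrib_left[symmetric] sum_distrib_right[symmetric] w_sum mult.commute mult.left_commute)
  have diag': "(\<Sum>p\<in>S. \<Sum>q\<in>S. w p * w q * inner (fst q) (snd q)) = ?E"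
    by (subst sum.swap) (simp add: sum_distrib_left[symmetric] sum_distrib_right[symmetric] w_sum mult.commute mult.left_commute)
  have cross': "(\<Sum>p\<in>S. \<Sum>q\<in>S. w p * w q * inner (fst q) (snd p)) = inner ?A ?B"
    by (simp add: inner_sum_left inner_sum_right sum_distrib_left mult.assoc)
  have "(\<Sum>p\<in>S. \<Sum>q\<in>S. w p * w q * inner (fst p) (snd q))
      = (\<Sum>q\<in>S. \<Sum>p\<in>S. w p * w q * inner (fst p) (snd q))"
    by (rule sum.swap)
  also have "\<dots> = inner ?A ?B"
    unfolding cross'[symmetric] by (simp add: mult.commute)
  finally have cross: "(\<Sum>p\<in>S. \<Sum>q\<in>S. w p * w q * inner (fst p) (snd q)) = inner ?A ?B" .
  have "0 \<le> (\<Sum>p\<in>S. \<Sum>q\<in>S. w p * w q * inner (fst p - fst q) (snd p - snd q))"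
    using mono w_nonneg unfolding monotone_set_def by (intro sum_nonneg) (auto intro!: mult_nonneg_nonneg)
  also have "\<dots> = (\<Sum>p\<in>S. \<Sum>q\<in>S. w p * w q * inner (fst p) (snd p))
      + (\<Sum>p\<in>S. \<Sum>q\<in>S. w p * w q * inner (fst q) (snd q))
      - (\<Sum>p\<in>S. \<Sum>q\<in>S. w p * w q * inner (fst p) (snd q))
      - (\<Sum>p\<in>S. \<Sum>q\<in>S. w p * w q * inner (fst q) (snd p))"
    by (simp add: sum_subtractf sum.distrib inner_diff_left inner_diff_right algebra_simps)
  also have "\<dots> = 2 * ?E - 2 * inner ?A ?B"
    unfolding diag diag' cross cross' by simp
  finally show ?thesis by simp
qed

lemma nonpos_if_le_small_multiples:
  fixes L c :: real
  assumes "\<And>t. 0 < t \<Longrightarrow> t \<le> 1 \<Longrightarrow> L \<le> t * c"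
  shows "L \<le> 0"
proof (rule tendsto_le[OF trivial_limit_at_right_real])
  show "((\<lambda>t. t * c) \<longlongrightarrow> 0) (at_right 0)" by (intro tendsto_mult_left_zero tendsto_ident_at)
  show "((\<lambda>_. L) \<longlongrightarrow> L) (at_right 0)" by (rule tendsto_const)
  show "\<forall>\<^sub>F t in at_right 0. L \<le> t * c"
    using eventually_at_right_real[OF zero_less_one] by eventually_elim (auto intro: assms)
qed

lemma monotone_set_lift_convex_hull_inner_le:
  fixes S :: "('a::real_inner \<times> 'a) set"
  assumes "finite S" and "monotone_set S"
    and "(A, B, E) \<in> convex hull ((\<lambda>p. (fst p, snd p, inner (fst p) (snd p))) ` S)"
  shows "inner A B \<le> E"
proof -
  define lift where "lift = (\<lambda>p::'a \<times> 'a. (fst p, snd p, inner (fst p) (snd p)))"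
  have "inj_on lift S" by (auto simp: inj_on_def lift_def prod_eq_iff)
  have "(A, B, E) \<in> convex hull (lift ` S)" using assms(3) unfolding lift_def .
  then obtain u where u_nonneg: "\<forall>q\<in>lift ` S. 0 \<le> u q" and u_sum: "sum u (lift ` S) = 1"
    and u_comb: "(\<Sum>q\<in>lift ` S. u q *\<^sub>R q) = (A, B, E)"
    unfolding convex_hull_finite[OF finite_imageI[OF assms(1)]] by blast
  define w where "w p = u (lift p)" for p
  have comb: "(A, B, E) = (\<Sum>p\<in>S. w p *\<^sub>R lift p)"
    using u_comb sum.reindex[OF \<open>inj_on lift S\<close>, of "\<lambda>q. u q *\<^sub>R q"] by (simp add: w_def)
  have "A = (\<Sum>p\<in>S. w p *\<^sub>R fst p)" "B = (\<Sum>p\<in>S. w p *\<^sub>R snd p)"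
    and "E = (\<Sum>p\<in>S. w p * inner (fst p) (snd p))"
    using arg_cong[OF comb, of fst] arg_cong[OF comb, of "\<lambda>z. fst (snd z)"]
      arg_cong[OF comb, of "\<lambda>z. snd (snd z)"]
    by (simp_all add: fst_sum snd_sum lift_def)
  moreover have "\<forall>p\<in>S. 0 \<le> w p" using u_nonneg by (simp add: w_def)
  moreover have "sum w S = 1" using u_sum sum.reindex[OF \<open>inj_on lift S\<close>, of u] by (simp add: w_def)
  ultimately show ?thesis using monotone_set_inner_convex_combination_le[OF assms(1,2)] by simp
qed

text \<open>Lift each pair to
  \<open>(a, b, \<langle>a, b\<rangle>)\<close> and maximise the concave function
  \<open>h (A, B, E) = - \<parallel>B - A\<parallel>\<^sup>2 / 4 - E\<close> over the convex hull of the lifts; at a maximiser the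
  one-sided derivative towards every vertex is nonpositive, which is the claimed inequality
  for \<open>x = (A - B) / 2\<close>.\<close>

lemma finite_monotone_set_minty:
  fixes S :: "('a::real_inner \<times> 'a) set"
  assumes "finite S" and "monotone_set S"
  shows "\<exists>x. \<forall>p\<in>S. inner (x - fst p) (x + snd p) \<le> 0"
proof (cases "S = {}")
  case True then show ?thesis by simp
next
  case False
  define C where "C = convex hull ((\<lambda>p. (fst p, snd p, inner (fst p) (snd p))) ` S)"
  define h where "h z = - inner (fst (snd z) - fst z) (fst (snd z) - fst z) / 4 - snd (snd z)"
    for z :: "'a \<times> 'a \<times> real"
  have "compact C" unfolding C_def using assms(1) by (simp add: finite_imp_compact_convex_hull)
  moreover have "C \<noteq> {}" using False by (simp add: C_def)
  moreover have "continuous_on C h" unfolding h_def by (intro continuous_intros) auto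
  ultimately obtain z where "z \<in> C" and z_max: "\<forall>v\<in>C. h v \<le> h z"
    using continuous_attains_sup by blast
  obtain A B E where z: "z = (A, B, E)" by (cases z)
  have "inner A B \<le> E"
    using monotone_set_lift_convex_hull_inner_le[OF assms] \<open>z \<in> C\<close> by (simp add: C_def z)
  show ?thesis
  proof (intro exI ballI)
    fix p assume "p \<in> S"
    obtain a b where p: "p = (a, b)" by (cases p)
    have vertex: "(a, b, inner a b) \<in> C"
      unfolding C_def using \<open>p \<in> S\<close> p by (intro hull_inc) force
    define L where "L = - inner (B - A) ((b - B) - (a - A)) / 2 - (inner a b - E)"
    define c where "c = inner ((b - B) - (a - A)) ((b - B) - (a - A)) / 4"
    have "L \<le> t * c" if "0 < t" "t \<le> 1" for t
    proof -
      have "(1 - t) *\<^sub>R z + t *\<^sub>R (a, b, inner a b) \<in> C"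
        using convexD[OF _ \<open>z \<in> C\<close> vertex, of "1 - t" t] that by (simp add: C_def)
      then have "h ((1 - t) *\<^sub>R z + t *\<^sub>R (a, b, inner a b)) \<le> h z" using z_max by blast
      moreover have "h ((1 - t) *\<^sub>R z + t *\<^sub>R (a, b, inner a b)) = h z + t * L - t * (t * c)"
        by (simp add: h_def z L_def c_def inner_simps inner_commute field_simps)
      ultimately show ?thesis using that by simp
    qed
    then have "L \<le> 0" by (rule nonpos_if_le_small_multiples)
    define x where "x = (1/2) *\<^sub>R (A - B)"
    have "inner (x - a) (x + b) = L - inner (A + B) (A + B) / 4 - (E - inner A B)"
      by (simp add: x_def L_def inner_simps inner_commute field_simps)
    moreover have "0 \<le> inner (A + B) (A + B)" by simp
    ultimately have "inner (x - a) (x + b) \<le> 0" using \<open>L \<le> 0\<close> \<open>inner A B \<le> E\<close> by argo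
    then show "inner (x - fst p) (x + snd p) \<le> 0" by (simp add: p)
  qed
qed

lemma inner_diff_nonpos_iff_mem_cball:
  fixes x a c :: "'a::real_inner"
  shows "inner (x - a) (x - c) \<le> 0 \<longleftrightarrow> x \<in> cball (midpoint a c) (dist a c / 2)"
proof -
  have "dist (midpoint a c) x ^ 2 = inner (x - a) (x - c) + (dist a c / 2) ^ 2"
    by (simp add: dist_norm midpoint_def power2_norm_eq_inner inner_simps inner_commute field_simps)
  then show ?thesis
    using abs_le_square_iff[of "dist (midpoint a c) x" "dist a c / 2"] by simp
qed

text \<open>Minty's theorem for an arbitrary monotone set: each finite subfamily of the balls
  \<open>{x. \<langle>x - a, x + b - y\<rangle> \<le> 0}\<close> has a common point by the finite case, and weak compactness,
  in the form of the intersection lemma for bounded closed convex sets, does the rest.\<close>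

lemma monotone_set_minty:
  fixes G :: "('a::{real_inner,complete_space} \<times> 'a) set"
  assumes "monotone_set G"
  shows "\<exists>x. \<forall>p\<in>G. inner (x - fst p) (x + snd p - y) \<le> 0"
proof (cases "G = {}")
  case True then show ?thesis by simp
next
  case False
  then obtain p0 where "p0 \<in> G" by blast
  define ball where "ball p = cball (midpoint (fst p) (y - snd p)) (dist (fst p) (y - snd p) / 2)" for p
  have mem_ball: "x \<in> ball p \<longleftrightarrow> inner (x - fst p) (x + snd p - y) \<le> 0" for x p
    unfolding ball_def inner_diff_nonpos_iff_mem_cball[symmetric] by (simp add: algebra_simps)
  define F where "F = {\<Inter>(ball ` S) | S. finite S \<and> S \<subseteq> G}"
  have "\<Inter>F \<noteq> {}"
  proof (rule directed_closed_convex_Inter_nonempty)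
    show "closed K" if "K \<in> F" for K
      using that by (auto simp: F_def ball_def)
    show "convex K" if "K \<in> F" for K
      using that by (auto simp: F_def ball_def intro!: convex_INT)
    show "K \<noteq> {}" if "K \<in> F" for K
    proof -
      obtain S where K: "K = \<Inter>(ball ` S)" and "finite S" "S \<subseteq> G" using \<open>K \<in> F\<close> by (auto simp: F_def)
      have "monotone_set ((\<lambda>p. (fst p, snd p - y)) ` S)"
        using assms \<open>S \<subseteq> G\<close> by (fastforce simp: monotone_set_def)
      then obtain x where "\<forall>p\<in>(\<lambda>p. (fst p, snd p - y)) ` S. inner (x - fst p) (x + snd p) \<le> 0"
        using finite_monotone_set_minty \<open>finite S\<close> by blast
      then have "x \<in> K" by (simp add: K mem_ball algebra_simps)
      then show ?thesis by blast
    qed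
    show "\<exists>M\<in>F. M \<subseteq> K \<inter> L" if KL: "K \<in> F" "L \<in> F" for K L
    proof -
      obtain S T where "K = \<Inter>(ball ` S)" "L = \<Inter>(ball ` T)" "finite S" "finite T" "S \<subseteq> G" "T \<subseteq> G"
        using KL by (auto simp: F_def)
      then show ?thesis by (intro bexI[of _ "\<Inter>(ball ` (S \<union> T))"]) (auto simp: F_def)
    qed
    have "ball p0 \<in> F" using \<open>p0 \<in> G\<close> unfolding F_def by (intro CollectI exI[of _ "{p0}"]) simp
    then show "\<exists>K\<in>F. bounded K" by (auto simp: ball_def)
  qed
  then obtain x where "x \<in> \<Inter>F" by blast
  have "ball p \<in> F" if "p \<in> G" for p using that unfolding F_def by (intro CollectI exI[of _ "{p}"]) simp
  then show ?thesis using \<open>x \<in> \<Inter>F\<close> mem_ball by blast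
qed

lemma maximal_monotone_memI:
  assumes "maximal_monotone A" and related: "\<And>a b. b \<in> A a \<Longrightarrow> 0 \<le> inner (x - a) (u - b)"
  shows "u \<in> A x"
proof -
  have mono: "monotone_op A" using assms(1) by (simp add: maximal_monotone_def)
  define B where "B = A(x := insert u (A x))"
  have mem_B: "v \<in> B y \<longleftrightarrow> v \<in> A y \<or> (y = x \<and> v = u)" for v y by (auto simp: B_def)
  have swap: "inner (y - z) (v - w) = inner (z - y) (w - v)" for y z v w :: 'a
    by (metis inner_minus_left inner_minus_right minus_diff_eq minus_minus)
  have "monotone_op B"
    unfolding monotone_op_def mem_B using mono related swap by (auto simp: monotone_op_def)
  moreover have "\<forall>z. A z \<subseteq> B z" by (simp add: mem_B subset_iff)
  ultimately have "B = A" using assms(1) by (simp add: maximal_monotone_def)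
  then show ?thesis using mem_B by blast
qed

lemma maximal_monotone_resolvent_solvable:
  fixes A :: "'a::{real_inner,complete_space} \<Rightarrow> 'a set"
  assumes "maximal_monotone A" and "0 < l"
  shows "\<exists>z. (x - z) /\<^sub>R l \<in> A z"
proof -
  have mono: "monotone_op A" using assms(1) by (simp add: maximal_monotone_def)
  define G where "G = {(a, l *\<^sub>R b) | a b. b \<in> A a}"
  have "monotone_set G"
    unfolding monotone_set_def G_def
    using mono assms(2) by (auto simp: monotone_op_def scaleR_diff_right[symmetric])
  then obtain z where z: "\<forall>p\<in>G. inner (z - fst p) (z + snd p - x) \<le> 0"
    using monotone_set_minty by blast
  have "(x - z) /\<^sub>R l \<in> A z"
  proof (rule maximal_monotone_memI[OF assms(1)])
    fix a b assume "b \<in> A a"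
    then have "inner (z - a) (z + l *\<^sub>R b - x) \<le> 0" using z by (force simp: G_def)
    moreover have "(x - z) /\<^sub>R l - b = (- 1 / l) *\<^sub>R (z + l *\<^sub>R b - x)"
      using assms(2) by (simp add: algebra_simps divide_inverse)
    ultimately show "0 \<le> inner (z - a) ((x - z) /\<^sub>R l - b)"
      using assms(2) by (simp add: divide_nonpos_pos)
  qed
  then show ?thesis by blast
qed

section \<open>The resolvent\<close>

lemma resolvent_eqI:
  assumes "monotone_op A" and "0 < l" and "(x - z) /\<^sub>R l \<in> A z"
  shows "resolvent A l x = z"
  unfolding resolvent_def
proof (rule the_equality)
  show "(x - z) /\<^sub>R l \<in> A z" by fact
  fix y assume "(x - y) /\<^sub>R l \<in> A y"
  then have "0 \<le> inner (y - z) ((x - y) /\<^sub>R l - (x - z) /\<^sub>R l)"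
    using assms(1,3) by (simp add: monotone_op_def)
  also have "\<dots> = - inner (y - z) (y - z) / l"
    by (simp add: inner_simps inner_commute algebra_simps divide_inverse)
  finally have "inner (y - z) (y - z) \<le> 0" using assms(2) by (simp add: divide_le_0_iff)
  then have "inner (y - z) (y - z) = 0" by (rule antisym) simp
  then show "y = z" by simp
qed

lemma resolvent_mem:
  fixes A :: "'a::{real_inner,complete_space} \<Rightarrow> 'a set"
  assumes "maximal_monotone A" and "0 < l"
  shows "(x - resolvent A l x) /\<^sub>R l \<in> A (resolvent A l x)"
proof -
  obtain z where z: "(x - z) /\<^sub>R l \<in> A z"
    using maximal_monotone_resolvent_solvable[OF assms] by blast
  moreover have "resolvent A l x = z"
    using assms z by (intro resolvent_eqI) (simp_all add: maximal_monotone_def)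
  ultimately show ?thesis by simp
qed

lemma resolvent_monotone_inner:
  fixes A :: "'a::{real_inner,complete_space} \<Rightarrow> 'a set"
  assumes "maximal_monotone A" and "0 < l" and "0 < m"
  shows "0 \<le> inner (resolvent A l x - resolvent A m x)
                ((x - resolvent A l x) /\<^sub>R l - (x - resolvent A m x) /\<^sub>R m)"
  using resolvent_mem[OF assms(1,2), of x] resolvent_mem[OF assms(1,3), of x] assms(1)
  by (simp add: maximal_monotone_def monotone_op_def)

lemma resolvent_ne_self:
  fixes A :: "'a::{real_inner,complete_space} \<Rightarrow> 'a set"
  assumes "maximal_monotone A" and "0 \<notin> A x" and "0 < l"
  shows "resolvent A l x \<noteq> x"
  using resolvent_mem[OF assms(1,3), of x] assms(2) by auto

lemma norm_resolvent_diff_le: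
  fixes A :: "'a::{real_inner,complete_space} \<Rightarrow> 'a set"
  assumes "maximal_monotone A" and "0 < l" and "0 < m"
  shows "norm (resolvent A l x - resolvent A m x) \<le> \<bar>1 - l / m\<bar> * norm (x - resolvent A m x)"
proof -
  define w where "w = resolvent A l x - resolvent A m x"
  define v where "v = x - resolvent A m x"
  have "0 \<le> inner w ((v - w) /\<^sub>R l - v /\<^sub>R m)"
    using resolvent_monotone_inner[OF assms, of x] by (simp add: w_def v_def)
  also have "inner w ((v - w) /\<^sub>R l - v /\<^sub>R m) = ((1 - l / m) * inner w v - inner w w) / l"
    using assms(2,3) by (simp add: inner_simps field_simps)
  finally have "inner w w \<le> (1 - l / m) * inner w v"
    using assms(2) by (simp add: zero_le_divide_iff)
  also have "\<dots> \<le> \<bar>1 - l / m\<bar> * \<bar>inner w v\<bar>" by (metis abs_ge_self abs_mult)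
  also have "\<dots> \<le> \<bar>1 - l / m\<bar> * (norm w * norm v)"
    by (intro mult_left_mono Cauchy_Schwarz_ineq2) simp
  finally have "norm w * norm w \<le> (\<bar>1 - l / m\<bar> * norm v) * norm w"
    by (simp add: power2_norm_eq_inner[symmetric] power2_eq_square mult_ac)
  then show ?thesis
    unfolding w_def[symmetric] v_def[symmetric]
    by (cases "norm w = 0") (simp_all add: mult_le_cancel_right)
qed

lemma norm_diff_resolvent_mono:
  fixes A :: "'a::{real_inner,complete_space} \<Rightarrow> 'a set"
  assumes "maximal_monotone A" and "0 < l" and "l \<le> m"
  shows "norm (x - resolvent A l x) \<le> norm (x - resolvent A m x)"
proof (rule ccontr)
  define p where "p = x - resolvent A l x"
  define q where "q = x - resolvent A m x"
  assume "\<not> norm (x - resolvent A l x) \<le> norm (x - resolvent A m x)"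
  then have qp: "norm q < norm p" by (simp add: p_def q_def)
  have "0 < m" using assms(2,3) by simp
  have "0 \<le> inner (q - p) (p /\<^sub>R l - q /\<^sub>R m)"
    using resolvent_monotone_inner[OF assms(1,2) \<open>0 < m\<close>, of x] by (simp add: p_def q_def)
  then have "0 \<le> inner (q - p) (p /\<^sub>R l - q /\<^sub>R m) * (l * m)"
    using assms(2) \<open>0 < m\<close> by simp
  also have "\<dots> = (l + m) * inner p q - l * inner q q - m * inner p p"
    using assms(2) \<open>0 < m\<close> by (simp add: inner_simps inner_commute field_simps)
  also have "\<dots> \<le> (l + m) * (norm p * norm q) - l * norm q ^ 2 - m * norm p ^ 2"
    using norm_cauchy_schwarz[of p q] assms(2) \<open>0 < m\<close>
    by (simp add: power2_norm_eq_inner mult_left_mono)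
  also have "\<dots> = (norm p - norm q) * (l * norm q - m * norm p)"
    by (simp add: algebra_simps power2_eq_square)
  finally have "0 \<le> (norm p - norm q) * (l * norm q - m * norm p)" .
  moreover have "l * norm q < m * norm p"
    using qp assms(3) \<open>0 < m\<close> by (smt (verit) mult_right_mono mult_strict_left_mono norm_ge_zero)
  then have "(norm p - norm q) * (l * norm q - m * norm p) < 0"
    using qp by (intro mult_pos_neg) simp_all
  ultimately show False by simp
qed

lemma continuous_on_resolvent:
  fixes A :: "'a::{real_inner,complete_space} \<Rightarrow> 'a set"
  assumes "maximal_monotone A"
  shows "continuous_on {0<..} (\<lambda>l. resolvent A l x)"
  unfolding continuous_on_eq_continuous_at[OF open_greaterThan]
proof
  fix m :: real assume "m \<in> {0<..}"
  have "((\<lambda>l. resolvent A l x - resolvent A m x) \<longlongrightarrow> 0) (at m)"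
  proof (rule Lim_null_comparison)
    show "\<forall>\<^sub>F l in at m. norm (resolvent A l x - resolvent A m x)
            \<le> \<bar>1 - l / m\<bar> * norm (x - resolvent A m x)"
      using eventually_at_in_open'[OF open_greaterThan \<open>m \<in> {0<..}\<close>]
      by eventually_elim (use assms \<open>m \<in> {0<..}\<close> in \<open>auto intro: norm_resolvent_diff_le\<close>)
    show "((\<lambda>l. \<bar>1 - l / m\<bar> * norm (x - resolvent A m x)) \<longlongrightarrow> 0) (at m)"
      using \<open>m \<in> {0<..}\<close> by (auto intro!: tendsto_eq_intros)
  qed
  then show "isCont (\<lambda>l. resolvent A l x) m"
    unfolding isCont_def by (rule LIM_zero_cancel)
qed

context
  fixes f :: "real \<Rightarrow> real" and a :: real
  assumes a_pos: "0 < a" and f_pos: "\<And>l. 0 < l \<Longrightarrow> 0 < f l" and f_mono: "mono_on {0<..} f"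
begin

lemma strict_mono_on_powr_mult: "strict_mono_on {0..} (\<lambda>l. if 0 < l then l powr a * f l else 0)"
proof (rule strict_mono_onI)
  fix r s :: real assume "r \<in> {0..}" "s \<in> {0..}" "r < s"
  then have "0 < s" by simp
  show "(if 0 < r then r powr a * f r else 0) < (if 0 < s then s powr a * f s else 0)"
  proof (cases "0 < r")
    case True
    have "r powr a * f r < s powr a * f r"
      using True \<open>r < s\<close> a_pos f_pos[OF True] by (intro mult_strict_right_mono powr_less_mono2) auto
    also have "\<dots> \<le> s powr a * f s"
      using True \<open>r < s\<close> by (intro mult_left_mono mono_onD[OF f_mono]) auto
    finally show ?thesis using True \<open>0 < s\<close> by simp
  next
    case False
    then show ?thesis using \<open>0 < s\<close> f_pos[OF \<open>0 < s\<close>] by simp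
  qed
qed

lemma filterlim_powr_mult_at_top: "filterlim (\<lambda>l. if 0 < l then l powr a * f l else 0) at_top at_top"
proof (rule filterlim_at_top_mono)
  show "filterlim (\<lambda>l. f 1 * l powr a) at_top at_top"
    using f_pos[OF zero_less_one] by (intro filterlim_tendsto_pos_mult_at_top[OF tendsto_const _ real_powr_at_top[OF a_pos]])
  show "\<forall>\<^sub>F l in at_top. f 1 * l powr a \<le> (if 0 < l then l powr a * f l else 0)"
    using eventually_ge_at_top[of "1::real"]
  proof eventually_elim
    case (elim l)
    then have "f 1 \<le> f l" by (intro mono_onD[OF f_mono]) auto
    then show ?case using elim by (simp add: mult.commute)
  qed
qed

lemma continuous_on_powr_mult:
  assumes "continuous_on {0<..} f"
  shows "continuous_on {0..} (\<lambda>l. if 0 < l then l powr a * f l else 0)" (is "continuous_on _ ?g")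
  unfolding continuous_on_eq_continuous_within
proof
  fix l :: real assume "l \<in> {0..}"
  show "continuous (at l within {0..}) ?g"
  proof (cases "0 < l")
    case True
    have "continuous_on {0<..} (\<lambda>l. l powr a * f l)"
      by (intro continuous_intros assms) auto
    then have "continuous_on {0<..} ?g" by (rule continuous_on_cong[THEN iffD1, rotated 2]) auto
    then have "isCont ?g l" using True by (simp add: continuous_on_eq_continuous_at)
    then show ?thesis by (rule continuous_at_imp_continuous_at_within)
  next
    case False
    with \<open>l \<in> {0..}\<close> have "l = 0" by simp
    have "(?g \<longlongrightarrow> 0) (at 0 within {0..})"
    proof (rule tendsto_sandwich[of "\<lambda>_. 0" _ _ "\<lambda>t. t powr a * f 1"])
      show "\<forall>\<^sub>F t in at 0 within {0..}. 0 \<le> ?g t"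
        using f_pos by (simp add: less_imp_le)
      show "\<forall>\<^sub>F t in at 0 within {0..}. ?g t \<le> t powr a * f 1"
        unfolding eventually_at
        by (intro exI[of _ 1]) (auto intro!: mult_left_mono mono_onD[OF f_mono])
      have "((\<lambda>t. t powr a) \<longlongrightarrow> 0) (at 0 within {0..})"
        by (rule tendsto_zero_powrI[OF tendsto_ident_at tendsto_const _ a_pos])
          (auto simp: eventually_at_filter)
      then show "((\<lambda>t. t powr a * f 1) \<longlongrightarrow> 0) (at 0 within {0..})"
        by (rule tendsto_mult_left_zero)
    qed simp
    then show ?thesis using \<open>l = 0\<close> by (simp add: continuous_within)
  qed
qed

end

theorem proposition2p1:
  fixes A :: "'a::{real_inner, complete_space} \<Rightarrow> 'a set"
    and p :: nat and x :: 'a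
  assumes "maximal_monotone A" and "p \<ge> 2" and "0 \<notin> A x"
  shows "continuous_on {0..} (\<lambda>l. phi A p l x)
       \<and> strict_mono_on {0..} (\<lambda>l. phi A p l x)
       \<and> phi A p 0 x = 0
       \<and> filterlim (\<lambda>l. phi A p l x) at_top at_top"
proof -
  define a where "a = 1 / (real p - 1)"
  define f where "f l = norm (x - resolvent A l x)" for l
  have phi_eq: "(\<lambda>l. phi A p l x) = (\<lambda>l. if 0 < l then l powr a * f l else 0)"
    by (simp add: fun_eq_iff phi_def a_def f_def)
  have "0 < a" using assms(2) by (simp add: a_def)
  moreover have "0 < f l" if "0 < l" for l
    using resolvent_ne_self[OF assms(1,3) that] by (auto simp: f_def)
  moreover have "mono_on {0<..} f"
    using norm_diff_resolvent_mono[OF assms(1)] by (auto intro!: mono_onI simp: f_def)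
  moreover have "continuous_on {0<..} f"
    unfolding f_def by (intro continuous_intros continuous_on_resolvent assms(1))
  ultimately show ?thesis
    unfolding phi_eq
    using continuous_on_powr_mult strict_mono_on_powr_mult filterlim_powr_mult_at_top
    by (simp add: phi_def)
qed

end
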